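(* Let $\eta=10^{-4}$. There are absolute constants $c,\epsilon_0>0$ such that for every $\epsilon\in(0,\epsilon_0)$ the following holds. Suppose a (possibly adaptive and randomized) procedure tosses a coin whose probability of heads is $p\in\{1/2-\eta,1/2+\eta\}$ at most $m$ times, and then outputs either a value in $\{1/2-\eta,1/2+\eta\}$ or the symbol `unknown'. If, for each of the two possible values of $p$, the procedure outputs `unknown' with probability at most $0.9$ and outputs the wrong value (the element of $\{1/2-\eta,1/2+\eta\}$ different from $p$) with probability at most $\epsilon$, then $m\ge c\log(1/\epsilon)$.
   Context: Coin tosses are independent; each toss comes up heads with probability $p$. *)

theory Defs
  imports "HOL-Probability.Probability"
begin

definition eta :: real where "eta = 1 / 10000"

text \<open>A deterministic adaptive coin-tossing procedure: a decision tree.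
  Toss f tosses the coin (True = heads) and continues with f applied to the result;
  Output r stops and outputs r, where None stands for the symbol unknown.\<close>
datatype proc = Output "real option" | Toss "bool \<Rightarrow> proc"

primrec depth :: "proc \<Rightarrow> nat" where
  "depth (Output r) = 0"
| "depth (Toss f) = Suc (max (depth (f True)) (depth (f False)))"

primrec run :: "real \<Rightarrow> proc \<Rightarrow> real option pmf" where
  "run p (Output r) = return_pmf r"
| "run p (Toss f) = bernoulli_pmf p \<bind> (\<lambda>b. run p (f b))"

text \<open>A randomized procedure is a probability distribution over deterministic ones
  (internal randomness drawn in advance, independently of the coin).\<close>
definition outcome :: "real \<Rightarrow> proc pmf \<Rightarrow> real option pmf" where
  "outcome p D = D \<bind> run p"

end

theory Submission
  imports Defs
begin

text \<open>Changing the bias of the coin from q to p changes the probability of any single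
  toss outcome by a factor of at least r, so each root-to-leaf path of a decision tree of
  depth m, and hence each output, has probability at least r^m times its old value.
  For p = 1/2 + \<eta> and q = 1/2 - \<eta> we take r = q/p.  A correct procedure for q outputs q
  with probability at least 1/20, whereas for p it outputs q with probability at most
  \<epsilon>; thus \<epsilon> \<ge> r^m/20, i.e. m \<ge> log(1/\<epsilon>)/(2 log(1/r)) once \<epsilon> < 1/400.\<close>

lemma pmf_run_ge_power_depth:
  assumes "0 \<le> p" "p \<le> 1" "0 \<le> q" "q \<le> 1"
    and "0 \<le> r" "r * q \<le> p" "r * (1 - q) \<le> 1 - p"
  shows "r ^ depth T * pmf (run q T) x \<le> pmf (run p T) x"
proof (induction T)
  case (Output y)
  then show ?case by simp
next
  case (Toss f)
  define d where "d = depth (Toss f)"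
  have "r = r * q + r * (1 - q)" by (simp add: algebra_simps)
  then have "r \<le> 1" using assms by linarith
  have pow: "r ^ d \<le> r * r ^ depth (f b)" for b
  proof -
    have "Suc (depth (f b)) \<le> d" unfolding d_def by (cases b) auto
    then show ?thesis using \<open>r \<le> 1\<close> assms(5) by (metis power_Suc power_decreasing)
  qed
  have step: "r ^ d * pmf (run q (f b)) x * c \<le> pmf (run p (f b)) x * c'"
    if "r * c \<le> c'" "0 \<le> c" "0 \<le> c'" for b c c'
  proof -
    have "r ^ d * pmf (run q (f b)) x * c \<le> (r * r ^ depth (f b)) * pmf (run q (f b)) x * c"
      using pow[of b] that(2) by (intro mult_right_mono) auto
    also have "\<dots> = (r * c) * (r ^ depth (f b) * pmf (run q (f b)) x)"
      by (simp add: ac_simps)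
    also have "\<dots> \<le> c' * pmf (run p (f b)) x"
      using that Toss.IH[OF rangeI] \<open>0 \<le> r\<close> by (intro mult_mono) auto
    finally show ?thesis by (simp add: mult.commute)
  qed
  have "r ^ d * pmf (run q (Toss f)) x
        = r ^ d * pmf (run q (f True)) x * q + r ^ d * pmf (run q (f False)) x * (1 - q)"
    using assms by (simp add: pmf_bind algebra_simps)
  also have "\<dots> \<le> pmf (run p (f True)) x * p + pmf (run p (f False)) x * (1 - p)"
    using assms by (intro add_mono step) auto
  also have "\<dots> = pmf (run p (Toss f)) x"
    using assms by (simp add: pmf_bind)
  finally show ?case unfolding d_def .
qed

lemma pmf_outcome_ge_power:
  assumes "0 \<le> p" "p \<le> 1" "0 \<le> q" "q \<le> 1"
    and "0 \<le> r" "r * q \<le> p" "r * (1 - q) \<le> 1 - p"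
    and depth: "\<forall>T\<in>set_pmf D. depth T \<le> m"
  shows "r ^ m * pmf (outcome q D) x \<le> pmf (outcome p D) x"
proof -
  have "r = r * q + r * (1 - q)" by (simp add: algebra_simps)
  then have "r \<le> 1" using assms by linarith
  have bounded: "integrable (measure_pmf D) (\<lambda>T. c * pmf (run s T) x)" for c s
    by (intro integrable_mult_right measure_pmf.integrable_const_bound[where B = 1])
       (auto simp: pmf_le_1)
  have "r ^ m * pmf (outcome q D) x = (\<integral>T. r ^ m * pmf (run q T) x \<partial>D)"
    by (simp add: outcome_def pmf_bind)
  also have "\<dots> \<le> (\<integral>T. 1 * pmf (run p T) x \<partial>D)"
  proof (intro integral_mono_AE bounded AE_pmfI)
    fix T assume "T \<in> set_pmf D"
    then have "r ^ m \<le> r ^ depth T"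
      using depth \<open>0 \<le> r\<close> \<open>r \<le> 1\<close> by (intro power_decreasing) auto
    then have "r ^ m * pmf (run q T) x \<le> r ^ depth T * pmf (run q T) x"
      by (intro mult_right_mono) auto
    also have "\<dots> \<le> pmf (run p T) x"
      using assms by (intro pmf_run_ge_power_depth) auto
    finally show "r ^ m * pmf (run q T) x \<le> 1 * pmf (run p T) x" by simp
  qed
  also have "\<dots> = pmf (outcome p D) x"
    by (simp add: outcome_def pmf_bind)
  finally show ?thesis .
qed

lemma pmf_correct_answer_ge:
  assumes "set_pmf M \<subseteq> {None, Some u, Some v}" "u \<noteq> v"
    and "pmf M None \<le> 9/10" "pmf M (Some v) \<le> \<epsilon>"
  shows "1/10 - \<epsilon> \<le> pmf M (Some u)"
proof -
  have "(\<Sum>y\<in>{None, Some u, Some v}. pmf M y) = 1"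
    using assms(1) by (intro sum_pmf_eq_1) auto
  then show ?thesis using assms by simp
qed

lemma ln_inverse_le_of_power_bound:
  assumes "0 < a" "0 < r" "0 < \<epsilon>" "\<epsilon> \<le> a\<^sup>2" "a * r ^ m \<le> \<epsilon>"
  shows "ln (1 / \<epsilon>) \<le> 2 * real m * ln (1 / r)"
proof -
  have "ln a + real m * ln r \<le> ln \<epsilon>"
    using ln_le_cancel_iff[of "a * r ^ m" \<epsilon>] assms by (simp add: ln_mult ln_realpow)
  moreover have "2 * ln a \<ge> ln \<epsilon>"
    using ln_le_cancel_iff[of \<epsilon> "a\<^sup>2"] assms by (simp add: ln_realpow)
  ultimately show ?thesis
    using assms by (simp add: ln_div)
qed

theorem theorem4p2:
  shows "\<exists>c \<epsilon>0. c > 0 \<and> \<epsilon>0 > 0 \<and>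
    (\<forall>\<epsilon>::real. 0 < \<epsilon> \<and> \<epsilon> < \<epsilon>0 \<longrightarrow>
      (\<forall>(m::nat) (D::proc pmf).
         (\<forall>T\<in>set_pmf D. depth T \<le> m) \<longrightarrow>
         (\<forall>p\<in>{1/2 - eta, 1/2 + eta}.
             set_pmf (outcome p D) \<subseteq> {None, Some (1/2 - eta), Some (1/2 + eta)} \<and>
             pmf (outcome p D) None \<le> 9/10 \<and>
             measure_pmf.prob (outcome p D) {Some q | q. q \<in> {1/2 - eta, 1/2 + eta} \<and> q \<noteq> p} \<le> \<epsilon>)
         \<longrightarrow> real m \<ge> c * ln (1 / \<epsilon>)))"
proof -
  define p q :: real where "p = 1/2 + eta" and "q = 1/2 - eta"
  have pq: "p = 5001/10000" "q = 4999/10000" by (simp_all add: p_def q_def eta_def)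
  define L where "L = ln (1 / (q / p))"
  have "L > 0" unfolding L_def pq by simp
  show ?thesis
  proof (rule exI[of _ "1 / (2 * L)"], rule exI[of _ "1/400 :: real"], intro conjI allI impI,
      goal_cases)
    case (3 \<epsilon> m D)
    note \<epsilon> = 3(1) and depth = 3(2)
    have "q \<noteq> p" using pq by simp
    then have "{Some x | x. x \<in> {q, p} \<and> x \<noteq> y} = {Some (if y = q then p else q)}"
      if "y \<in> {q, p}" for y using that by auto
    with 3(3) have correct: "set_pmf (outcome q D) \<subseteq> {None, Some q, Some p}"
        "pmf (outcome q D) None \<le> 9/10" "pmf (outcome q D) (Some p) \<le> \<epsilon>"
      and wrong: "pmf (outcome p D) (Some q) \<le> \<epsilon>"
      using \<open>q \<noteq> p\<close> unfolding p_def[symmetric] q_def[symmetric]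
      by (auto simp: measure_pmf_single)
    have "1/20 \<le> pmf (outcome q D) (Some q)"
      using pmf_correct_answer_ge[OF correct(1) \<open>q \<noteq> p\<close> correct(2,3)] \<epsilon> by linarith
    then have "1/20 * (q / p) ^ m \<le> (q / p) ^ m * pmf (outcome q D) (Some q)"
      by (simp add: mult.commute mult_left_mono pq)
    also have "\<dots> \<le> \<epsilon>"
    proof -
      have "(q / p) ^ m * pmf (outcome q D) (Some q) \<le> pmf (outcome p D) (Some q)"
        by (rule pmf_outcome_ge_power[OF _ _ _ _ _ _ _ depth]) (simp_all add: pq)
      with wrong show ?thesis by linarith
    qed
    finally have "ln (1 / \<epsilon>) \<le> 2 * real m * L"
      unfolding L_def by (rule ln_inverse_le_of_power_bound[rotated 4]) (use \<epsilon> pq in \<open>auto simp: power2_eq_square\<close>)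
    then show "1 / (2 * L) * ln (1 / \<epsilon>) \<le> real m"
      using \<open>L > 0\<close> by (simp add: field_simps)
  qed (use \<open>L > 0\<close> in auto)
qed

end
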